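(* Let $F:[0,1]\to\mathbb R$ be measurable. Assume that for each $\varepsilon>0$ there is a countable collection $(S_j)_j$ of pairwise disjoint measurable subsets of $[0,1]$ such that $\sum_j\mathrm{meas}(S_j)\geq1-\varepsilon$ and, for each $j$ and each $y\in S_j$, $$\mathrm{meas}(\{x\in S_j\colon F(x)=F(y)\})\leq\varepsilon\,\mathrm{meas}(S_j).$$ Then the cumulative distribution function of $F_\ast(\nu)$ is continuous, where $\nu$ is Lebesgue measure on $[0,1]$.
   Context: $\mathrm{meas}$ denotes Lebesgue measure. *)

theory Defs
  imports "HOL-Probability.Probability"
begin

end

theory Submission
  imports Defs
begin

text \<open>The cdf of \<open>F\<^sub>*\<nu>\<close> is continuous exactly when every level set \<open>{F = a}\<close> is
  \<open>\<nu>\<close>-null. Fix \<open>\<epsilon>\<close> and the corresponding sets \<open>S\<^sub>j\<close>. If the level set meets \<open>S\<^sub>j\<close> in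
  some \<open>y\<close>, then its trace on \<open>S\<^sub>j\<close> is \<open>{x \<in> S\<^sub>j. F x = F y}\<close>, of measure at most
  \<open>\<epsilon> meas(S\<^sub>j)\<close>; summing over \<open>j\<close> bounds the part inside \<open>\<Union>\<^sub>j S\<^sub>j\<close> by \<open>\<epsilon>\<close>, and the
  rest of \<open>[0,1]\<close> has measure at most \<open>\<epsilon>\<close>. So every level set has measure at most \<open>2\<epsilon>\<close>.\<close>

lemma measure_inter_UNION_le:
  fixes S :: "nat \<Rightarrow> 'a set"
  assumes S: "range S \<subseteq> sets M" "disjoint_family S" "(\<Union>j. S j) \<in> fmeasurable M"
    and A: "A \<in> sets M"
    and small: "\<And>j. measure M (A \<inter> S j) \<le> \<epsilon> * measure M (S j)"
  shows "measure M (A \<inter> (\<Union>j. S j)) \<le> \<epsilon> * measure M (\<Union>j. S j)"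
proof -
  have sums_S: "(\<lambda>j. measure M (S j)) sums measure M (\<Union>j. S j)"
    using S by (intro measure_UNION) (auto dest: fmeasurableD2)
  have "(\<Union>j. A \<inter> S j) \<in> fmeasurable M"
    using S A by (intro fmeasurableI2[OF S(3)]) auto
  then have "(\<lambda>j. measure M (A \<inter> S j)) sums measure M (\<Union>j. A \<inter> S j)"
    using S A by (intro measure_UNION) (auto simp: disjoint_family_on_def dest: fmeasurableD2)
  moreover have "(\<lambda>j. \<epsilon> * measure M (S j)) sums (\<epsilon> * measure M (\<Union>j. S j))"
    using sums_S by (rule sums_mult)
  ultimately have "measure M (\<Union>j. A \<inter> S j) \<le> \<epsilon> * measure M (\<Union>j. S j)"
    using small by (rule sums_le[rotated])
  then show ?thesis
    by (simp only: Int_UN_distrib)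
qed

lemma measure_Diff_UNION:
  assumes S: "range S \<subseteq> sets M" "disjoint_family S" "\<And>j. S j \<subseteq> \<Omega>"
    and \<Omega>: "\<Omega> \<in> fmeasurable M"
  shows "measure M (\<Omega> - (\<Union>j. S j)) = measure M \<Omega> - (\<Sum>j. measure M (S j))"
proof -
  have U: "(\<Union>j. S j) \<in> fmeasurable M"
    using S by (intro fmeasurableI2[OF \<Omega>]) auto
  then have "(\<lambda>j. measure M (S j)) sums measure M (\<Union>j. S j)"
    using S by (intro measure_UNION) (auto dest: fmeasurableD2)
  with S \<Omega> U show ?thesis
    by (subst measure_Diff) (auto simp: sums_unique dest: fmeasurableD2)
qed

lemma measure_le_of_small_on_disjoint_family:
  assumes S: "range S \<subseteq> sets M" "disjoint_family S" "\<And>j. S j \<subseteq> \<Omega>"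
    and \<Omega>: "\<Omega> \<in> fmeasurable M"
    and A: "A \<in> sets M" "A \<subseteq> \<Omega>"
    and small: "\<And>j. measure M (A \<inter> S j) \<le> \<epsilon> * measure M (S j)" "0 \<le> \<epsilon>"
  shows "measure M A \<le> \<epsilon> * measure M \<Omega> + (measure M \<Omega> - (\<Sum>j. measure M (S j)))"
proof -
  let ?U = "\<Union>j. S j"
  have U: "?U \<in> fmeasurable M" "?U \<subseteq> \<Omega>"
    using S by (auto intro: fmeasurableI2[OF \<Omega>])
  have "measure M A \<le> measure M ((A \<inter> ?U) \<union> (\<Omega> - ?U))"
    using A U \<Omega> by (intro measure_mono_fmeasurable fmeasurableI2[OF \<Omega>]) (auto dest: fmeasurableD)
  also have "\<dots> \<le> measure M (A \<inter> ?U) + measure M (\<Omega> - ?U)"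
    using A U \<Omega> by (intro measure_Un_le) auto
  also have "measure M (A \<inter> ?U) \<le> \<epsilon> * measure M ?U"
    using S(1,2) U(1) A(1) small(1) by (rule measure_inter_UNION_le)
  also have "\<epsilon> * measure M ?U \<le> \<epsilon> * measure M \<Omega>"
    using U \<Omega> small(2) by (intro mult_left_mono measure_mono_fmeasurable) auto
  finally show ?thesis
    using measure_Diff_UNION[OF S \<Omega>] by linarith
qed

lemma measure_level_set_inter_le:
  assumes small: "\<And>y. y \<in> S \<Longrightarrow> measure M {x \<in> S. F x = F y} \<le> \<epsilon> * measure M S" "0 \<le> \<epsilon>"
    and "S \<subseteq> \<Omega>"
  shows "measure M ({x \<in> \<Omega>. F x = a} \<inter> S) \<le> \<epsilon> * measure M S"
proof (cases "\<exists>y\<in>S. F y = a")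
  case True
  then obtain y where y: "y \<in> S" "F y = a"
    by blast
  then have "{x \<in> \<Omega>. F x = a} \<inter> S = {x \<in> S. F x = F y}"
    using \<open>S \<subseteq> \<Omega>\<close> by auto
  then show ?thesis
    using small(1)[OF y(1)] by simp
next
  case False
  then have "{x \<in> \<Omega>. F x = a} \<inter> S = {}"
    by auto
  then show ?thesis
    using small(2) by simp
qed

lemma measure_level_set_le:
  assumes S: "range S \<subseteq> sets M" "disjoint_family S" "\<And>j. S j \<subseteq> \<Omega>"
    and \<Omega>: "\<Omega> \<in> fmeasurable M"
    and level: "{x \<in> \<Omega>. F x = a} \<in> sets M"
    and small: "\<And>j y. y \<in> S j \<Longrightarrow> measure M {x \<in> S j. F x = F y} \<le> \<epsilon> * measure M (S j)"
      "0 \<le> \<epsilon>"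
  shows "measure M {x \<in> \<Omega>. F x = a}
    \<le> \<epsilon> * measure M \<Omega> + (measure M \<Omega> - (\<Sum>j. measure M (S j)))"
proof (rule measure_le_of_small_on_disjoint_family[OF S \<Omega> level])
  show "measure M ({x \<in> \<Omega>. F x = a} \<inter> S j) \<le> \<epsilon> * measure M (S j)" for j
    using small S(3) by (rule measure_level_set_inter_le)
qed (use small(2) in auto)

lemma measure_level_set_eq_0:
  assumes \<Omega>: "\<Omega> \<in> fmeasurable M"
    and level: "{x \<in> \<Omega>. F x = a} \<in> sets M"
    and cover: "\<And>\<epsilon>. \<epsilon> > 0 \<Longrightarrow> \<exists>S. range S \<subseteq> sets M \<and> disjoint_family S \<and> (\<forall>j. S j \<subseteq> \<Omega>) \<and>
      measure M \<Omega> - \<epsilon> \<le> (\<Sum>j. measure M (S j)) \<and>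
      (\<forall>j. \<forall>y\<in>S j. measure M {x \<in> S j. F x = F y} \<le> \<epsilon> * measure M (S j))"
  shows "measure M {x \<in> \<Omega>. F x = a} = 0"
proof -
  let ?A = "{x \<in> \<Omega>. F x = a}" and ?C = "measure M \<Omega> + 1"
  have C_pos: "?C > 0"
    using measure_nonneg[of M \<Omega>] by linarith
  have bound: "measure M ?A \<le> ?C * \<epsilon>" if \<epsilon>: "\<epsilon> > 0" for \<epsilon>
  proof -
    obtain S where S: "range S \<subseteq> sets M" "disjoint_family S" "\<And>j. S j \<subseteq> \<Omega>"
      "measure M \<Omega> - \<epsilon> \<le> (\<Sum>j. measure M (S j))"
      "\<And>j y. y \<in> S j \<Longrightarrow> measure M {x \<in> S j. F x = F y} \<le> \<epsilon> * measure M (S j)"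
      using cover[OF \<epsilon>] by blast
    have "measure M ?A \<le> \<epsilon> * measure M \<Omega> + (measure M \<Omega> - (\<Sum>j. measure M (S j)))"
      using S(1-3) \<Omega> level S(5) less_imp_le[OF \<epsilon>] by (rule measure_level_set_le)
    with S(4) show ?thesis
      by (simp add: algebra_simps)
  qed
  have "measure M ?A \<le> 0"
  proof (rule field_le_epsilon)
    show "measure M ?A \<le> 0 + e" if "e > 0" for e
      using bound[of "e / ?C"] that C_pos by simp
  qed
  then show ?thesis
    using measure_nonneg[of M ?A] by linarith
qed

lemma (in prob_space) isCont_cdf_distr_iff:
  fixes F :: "'a \<Rightarrow> real"
  assumes "F \<in> borel_measurable M"
  shows "isCont (cdf (distr M borel F)) a \<longleftrightarrow> measure M {x \<in> space M. F x = a} = 0"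
proof -
  interpret D: finite_borel_measure "distr M borel F"
    using assms by (simp add: real_distribution.finite_borel_measure_M)
  have "F -` {a} \<inter> space M = {x \<in> space M. F x = a}"
    by auto
  then show ?thesis
    using assms by (simp add: D.isCont_cdf measure_distr)
qed

theorem lemma3p6:
  fixes F :: "real \<Rightarrow> real"
  assumes F_meas: "F \<in> borel_measurable (lebesgue_on {0..1})"
    and cover: "\<And>\<epsilon>::real. \<epsilon> > 0 \<Longrightarrow>
      \<exists>S :: nat \<Rightarrow> real set.
        (\<forall>j. S j \<in> sets lebesgue \<and> S j \<subseteq> {0..1}) \<and>
        disjoint_family S \<and>
        (\<Sum>j. measure lebesgue (S j)) \<ge> 1 - \<epsilon> \<and>
        (\<forall>j. \<forall>y\<in>S j. measure lebesgue {x \<in> S j. F x = F y} \<le> \<epsilon> * measure lebesgue (S j))"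
  shows "continuous_on UNIV (cdf (distr (lebesgue_on {0..1}) borel F))"
proof -
  interpret prob_space "lebesgue_on {0..1::real}"
    by (rule prob_spaceI) (simp add: emeasure_restrict_space)
  have "measure lebesgue {x \<in> {0..1}. F x = a} = 0" for a
  proof (rule measure_level_set_eq_0)
    show "{x \<in> {0..1::real}. F x = a} \<in> sets lebesgue"
      using measurable_sets[OF F_meas, of "{a}"]
      by (simp add: sets_restrict_space_iff vimage_def Int_def conj_commute)
    show "\<exists>S. range S \<subseteq> sets lebesgue \<and> disjoint_family S \<and> (\<forall>j. S j \<subseteq> {0..1}) \<and>
        measure lebesgue {0..1::real} - \<epsilon> \<le> (\<Sum>j. measure lebesgue (S j)) \<and>
        (\<forall>j. \<forall>y\<in>S j. measure lebesgue {x \<in> S j. F x = F y} \<le> \<epsilon> * measure lebesgue (S j))"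
      if "\<epsilon> > 0" for \<epsilon>
      using cover[OF that] by (simp add: image_subset_iff) blast
  qed simp
  then have "measure (lebesgue_on {0..1}) {x \<in> space (lebesgue_on {0..1}). F x = a} = 0" for a
    by (subst measure_restrict_space) auto
  then show ?thesis
    using F_meas by (auto intro!: continuous_at_imp_continuous_on simp: isCont_cdf_distr_iff)
qed

end
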